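(* Let $\vec{\mathcal G}=([n],E)$ be a directed graph with $m=|E|$ edges, every vertex having at least one outgoing edge and having at least one directed cycle. Let the weights $(r_{ij})_{(i,j)\in E}$ be independent absolutely continuous random variables, where $r_{ij}$ has density $f_{ij}$ and there is $\phi>0$ with $f_{ij}(y)\le\phi$ for all $(i,j)\in E$ and $y\in\mathbb R$. For $k\in[n]$ let $X^{(k)}_{ij}(r)$ be the $k$-th break point (in increasing order) of the function $x\mapsto\lambda(x,r_{-ij})$, with the convention $X^{(k)}_{ij}=0$ if this function has fewer than $k$ break points. Then for every $\alpha>0$, $$\mathbb P\bigl(\exists (i,j)\in E,\ \exists k\in[n]:\ |r_{ij}-X^{(k)}_{ij}|\le\alpha\bigr)\le 2\alpha n m\phi .$$
   Context: For weights $r$, $\lambda(r)$ is the minimum over all directed cycles of $\vec{\mathcal G}$ of the mean weight (sum of edge weights divided by number of edges) of the cycle; the function $x\mapsto\lambda(x,r_{-ij})$ is continuous and piecewise affine with at most $n$ break points. Here $r_{-ij}$ is $r$ with coordinate $ij$ removed and $(x,r_{-ij})$ is $r$ with coordinate $ij$ replaced by $x$. *)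

theory Defs
  imports "HOL-Probability.Probability"
begin

type_synonym edge = "nat \<times> nat"

text \<open>Self-loops give cycles of length 1.\<close>
definition dcycles :: "nat \<Rightarrow> edge set \<Rightarrow> nat list set" where
  "dcycles n E = {c. c \<noteq> [] \<and> distinct c \<and> set c \<subseteq> {1..n} \<and>
      (\<forall>t<length c. (c ! t, c ! ((t + 1) mod length c)) \<in> E)}"

definition cycle_edges :: "nat list \<Rightarrow> edge list" where
  "cycle_edges c = map (\<lambda>t. (c ! t, c ! ((t + 1) mod length c))) [0..<length c]"

definition cycle_mean :: "(edge \<Rightarrow> real) \<Rightarrow> nat list \<Rightarrow> real" where
  "cycle_mean r c = (\<Sum>e\<leftarrow>cycle_edges c. r e) / real (length c)"

definition min_cycle_mean :: "nat \<Rightarrow> edge set \<Rightarrow> (edge \<Rightarrow> real) \<Rightarrow> real" where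
  "min_cycle_mean n E r = Min (cycle_mean r ` dcycles n E)"

definition break_points :: "(real \<Rightarrow> real) \<Rightarrow> real set" where
  "break_points g = {x. \<not> (\<exists>\<epsilon>>0. \<exists>a b. \<forall>y. \<bar>y - x\<bar> < \<epsilon> \<longrightarrow> g y = a * y + b)}"

definition kth_break :: "nat \<Rightarrow> edge set \<Rightarrow> edge \<Rightarrow> nat \<Rightarrow> (edge \<Rightarrow> real) \<Rightarrow> real" where
  "kth_break n E e k r =
     (let B = break_points (\<lambda>x. min_cycle_mean n E (r(e := x)))
      in if finite B \<and> 1 \<le> k \<and> k \<le> card B then sorted_list_of_set B ! (k - 1) else 0)"

end

theory Submission
  imports Defs
begin

text \<open>
  Fix an edge e. As a function of x = r e, the mean of a cycle c is affine, with slope the number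
  of occurrences of e in c divided by the length of c and intercept depending only on r_{-e}; so
  \<open>\<lambda>(x, r_{-e})\<close> is a minimum of finitely many affine functions. Its break points are exactly
  the points where two minimising lines of different slopes cross, hence each k-th break point is
  a measurable function of r_{-e} alone and is independent of r e. A random variable with density
  bounded by \<open>\<phi>\<close> lies within \<open>\<alpha>\<close> of an independent one with probability at most
  \<open>2 \<alpha> \<phi>\<close>, and a union bound over the n |E| pairs (e, k) gives the theorem.
\<close>

lemma not_break_point_iff:
  "x \<notin> break_points g \<longleftrightarrow> (\<exists>A B. \<forall>\<^sub>F y in nhds x. g y = A * y + B)"
  unfolding break_points_def eventually_nhds_metric dist_real_def by auto

lemma eq_slope_if_affine_le_near:
  fixes x A B a b :: real
  assumes near: "\<forall>\<^sub>F y in nhds x. A * y + B \<le> a * y + b" and at_x: "A * x + B = a * x + b"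
  shows "A = a"
proof -
  obtain d where "d > 0" and d: "\<And>y. \<bar>y - x\<bar> < d \<Longrightarrow> A * y + B \<le> a * y + b"
    using near unfolding eventually_nhds_metric dist_real_def by auto
  have "A * (x + d / 2) + B \<le> a * (x + d / 2) + b" "A * (x - d / 2) + B \<le> a * (x - d / 2) + b"
    using d \<open>d > 0\<close> by auto
  with at_x have "A * (d / 2) = a * (d / 2)"
    unfolding distrib_left right_diff_distrib by linarith
  with \<open>d > 0\<close> show ?thesis by simp
qed

lemma Min_affine_eventually_eq_active:
  fixes a b :: "'i \<Rightarrow> real"
  assumes fin: "finite I" and ne: "I \<noteq> {}"
  defines "G \<equiv> \<lambda>x. Min ((\<lambda>i. a i * x + b i) ` I)"
  shows "\<forall>\<^sub>F y in nhds x. G y = Min ((\<lambda>i. a i * y + b i) ` {i\<in>I. a i * x + b i = G x})"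
proof -
  define J where "J = {i\<in>I. a i * x + b i = G x}"
  have G_le: "G y \<le> a i * y + b i" if "i \<in> I" for i y
    unfolding G_def using fin that by (intro Min_le) auto
  have "G y \<in> (\<lambda>i. a i * y + b i) ` I" for y
    unfolding G_def using fin ne by (intro Min_in) auto
  then have G_attained: "\<exists>i\<in>I. G y = a i * y + b i" for y
    by blast
  obtain i0 where "i0 \<in> J"
    using G_attained[of x] unfolding J_def by force
  have "finite J" "J \<subseteq> I" using fin by (auto simp: J_def)
  have "\<forall>\<^sub>F y in nhds x. a i0 * y + b i0 < a j * y + b j" if "j \<in> I - J" for j
  proof -
    have "((\<lambda>y. (a j * y + b j) - (a i0 * y + b i0)) \<longlongrightarrow> (a j * x + b j) - (a i0 * x + b i0)) (nhds x)"
      by (intro tendsto_intros filterlim_ident)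
    moreover have "a i0 * x + b i0 < a j * x + b j"
      using G_le[of j x] \<open>i0 \<in> J\<close> that by (auto simp: J_def)
    ultimately have "\<forall>\<^sub>F y in nhds x. 0 < (a j * y + b j) - (a i0 * y + b i0)"
      by (intro order_tendstoD(1)) auto
    then show ?thesis by eventually_elim simp
  qed
  then have "\<forall>\<^sub>F y in nhds x. \<forall>j\<in>I - J. a i0 * y + b i0 < a j * y + b j"
    using fin by (intro eventually_ball_finite) auto
  then show ?thesis
    unfolding J_def[symmetric]
  proof eventually_elim
    case (elim y)
    show "G y = Min ((\<lambda>i. a i * y + b i) ` J)"
    proof (rule antisym)
      show "G y \<le> Min ((\<lambda>i. a i * y + b i) ` J)"
        unfolding G_def using fin \<open>J \<subseteq> I\<close> \<open>i0 \<in> J\<close> by (intro Min_antimono) auto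
      obtain k where "k \<in> I" "G y = a k * y + b k" using G_attained by blast
      moreover have "Min ((\<lambda>i. a i * y + b i) ` J) \<le> a i0 * y + b i0"
        using \<open>finite J\<close> \<open>i0 \<in> J\<close> by (intro Min_le) auto
      ultimately show "Min ((\<lambda>i. a i * y + b i) ` J) \<le> G y"
        using elim \<open>finite J\<close> by (cases "k \<in> J") (auto intro: Min_le dest!: bspec[of _ _ k])
    qed
  qed
qed

lemma break_point_Min_affine_imp_two_active_slopes:
  fixes a b :: "'i \<Rightarrow> real"
  assumes fin: "finite I" and ne: "I \<noteq> {}"
  defines "G \<equiv> \<lambda>x. Min ((\<lambda>i. a i * x + b i) ` I)"
  assumes "x \<in> break_points G"
  shows "\<exists>i\<in>I. \<exists>j\<in>I. a i \<noteq> a j \<and> a i * x + b i = G x \<and> a j * x + b j = G x"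
proof (rule ccontr)
  assume "\<not> ?thesis"
  then have one_slope: "a i = a j" if "i \<in> I" "a i * x + b i = G x" "j \<in> I" "a j * x + b j = G x" for i j
    using that by blast
  have "G x \<in> (\<lambda>i. a i * x + b i) ` I"
    unfolding G_def using fin ne by (intro Min_in) auto
  then obtain i0 where i0: "i0 \<in> I" "a i0 * x + b i0 = G x"
    by auto
  have same_line: "a i = a i0" "b i = b i0" if "i \<in> I" "a i * x + b i = G x" for i
    using one_slope[OF that i0] that(2) i0(2) by auto
  have "(\<lambda>i. a i * y + b i) ` {i\<in>I. a i * x + b i = G x} = {a i0 * y + b i0}" for y
  proof -
    have "(\<lambda>i. a i * y + b i) ` {i\<in>I. a i * x + b i = G x} =
        (\<lambda>_. a i0 * y + b i0) ` {i\<in>I. a i * x + b i = G x}"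
      by (intro image_cong refl) (metis (mono_tags, lifting) mem_Collect_eq same_line)
    then show ?thesis using i0 by auto
  qed
  then have "\<forall>\<^sub>F y in nhds x. G y = a i0 * y + b i0"
    using Min_affine_eventually_eq_active[OF fin ne, of a b x] unfolding G_def by simp
  then have "x \<notin> break_points G"
    unfolding not_break_point_iff by blast
  with \<open>x \<in> break_points G\<close> show False by contradiction
qed

lemma break_point_Min_affine_if_two_active_slopes:
  fixes a b :: "'i \<Rightarrow> real"
  assumes fin: "finite I"
  defines "G \<equiv> \<lambda>x. Min ((\<lambda>i. a i * x + b i) ` I)"
  assumes "i \<in> I" "j \<in> I" "a i \<noteq> a j" "a i * x + b i = G x" "a j * x + b j = G x"
  shows "x \<in> break_points G"
proof (rule ccontr)
  assume "x \<notin> break_points G"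
  then obtain A B where near: "\<forall>\<^sub>F y in nhds x. G y = A * y + B"
    by (auto simp: not_break_point_iff)
  have slope: "A = a k" if "k \<in> I" "a k * x + b k = G x" for k
  proof (rule eq_slope_if_affine_le_near)
    have G_le: "G y \<le> a k * y + b k" for y
      unfolding G_def using fin \<open>k \<in> I\<close> by (intro Min_le) auto
    show "\<forall>\<^sub>F y in nhds x. A * y + B \<le> a k * y + b k"
      using near by eventually_elim (metis G_le)
    show "A * x + B = a k * x + b k"
      using eventually_nhds_x_imp_x[OF near] that(2) by simp
  qed
  from slope[of i] slope[of j] assms(3-) show False by simp
qed

lemma break_points_Min_affine_iff:
  fixes a b :: "'i \<Rightarrow> real"
  assumes "finite I" and "I \<noteq> {}"
  defines "G \<equiv> \<lambda>x. Min ((\<lambda>i. a i * x + b i) ` I)"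
  shows "x \<in> break_points G \<longleftrightarrow>
    (\<exists>i\<in>I. \<exists>j\<in>I. a i \<noteq> a j \<and> a i * x + b i = G x \<and> a j * x + b j = G x)"
  using break_point_Min_affine_imp_two_active_slopes[OF assms(1,2)]
    break_point_Min_affine_if_two_active_slopes[OF assms(1)]
  unfolding G_def by blast

definition kth_smallest :: "nat \<Rightarrow> real set \<Rightarrow> real" where
  "kth_smallest k B = (if finite B \<and> 1 \<le> k \<and> k \<le> card B then sorted_list_of_set B ! (k - 1) else 0)"

lemma sorted_list_of_set_nth_le_iff:
  fixes B :: "real set"
  assumes fin: "finite B" and k: "1 \<le> k" "k \<le> card B"
  shows "sorted_list_of_set B ! (k - 1) \<le> t \<longleftrightarrow> k \<le> card {x\<in>B. x \<le> t}"
proof -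
  define xs where "xs = sorted_list_of_set B"
  have s: "sorted xs" "distinct xs" "set xs = B" "length xs = card B"
    using fin by (auto simp: xs_def)
  show ?thesis unfolding xs_def[symmetric]
  proof
    assume le: "xs ! (k - 1) \<le> t"
    have "set (take k xs) \<subseteq> {x\<in>B. x \<le> t}"
    proof
      fix x assume "x \<in> set (take k xs)"
      then obtain i where i: "i < k" "i < length xs" "x = xs ! i"
        by (auto simp: in_set_conv_nth)
      have "xs ! i \<le> xs ! (k - 1)" using s k i by (intro sorted_nth_mono) auto
      then show "x \<in> {x\<in>B. x \<le> t}" using le i s(3) by auto
    qed
    moreover have "card (set (take k xs)) = k"
      using s k by (simp add: distinct_card)
    ultimately show "k \<le> card {x\<in>B. x \<le> t}" using fin
      by (metis (no_types, lifting) card_mono finite_subset mem_Collect_eq subsetI)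
  next
    assume c: "k \<le> card {x\<in>B. x \<le> t}"
    show "xs ! (k - 1) \<le> t"
    proof (rule ccontr)
      assume gt: "\<not> xs ! (k - 1) \<le> t"
      have "{x\<in>B. x \<le> t} \<subseteq> set (take (k - 1) xs)"
      proof
        fix x assume x: "x \<in> {x\<in>B. x \<le> t}"
        then obtain i where i: "i < length xs" "x = xs ! i" using s(3) by (auto simp: in_set_conv_nth)
        have "i < k - 1"
        proof (rule ccontr)
          assume "\<not> i < k - 1"
          then have "xs ! (k - 1) \<le> xs ! i" using s i k by (intro sorted_nth_mono) auto
          then show False using gt x i by auto
        qed
        then show "x \<in> set (take (k - 1) xs)" using i by (auto simp: in_set_conv_nth)
      qed
      then have "card {x\<in>B. x \<le> t} \<le> card (set (take (k - 1) xs))" by (intro card_mono) auto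
      also have "\<dots> \<le> k - 1" using card_length[of "take (k - 1) xs"] by simp
      finally show False using c k by simp
    qed
  qed
qed

lemma kth_smallest_le_iff:
  assumes "finite B"
  shows "kth_smallest k B \<le> t \<longleftrightarrow>
    (1 \<le> k \<and> k \<le> card B \<and> k \<le> card {x\<in>B. x \<le> t}) \<or> (\<not> (1 \<le> k \<and> k \<le> card B) \<and> 0 \<le> t)"
  using assms sorted_list_of_set_nth_le_iff[OF assms, of k t] by (auto simp: kth_smallest_def)

lemma measurable_card_image_Collect:
  fixes g :: "'p \<Rightarrow> 'w \<Rightarrow> real"
  assumes "finite P" and g: "\<And>p. p \<in> P \<Longrightarrow> g p \<in> borel_measurable N"
    and R: "\<And>p. p \<in> P \<Longrightarrow> Measurable.pred N (R p)"
  shows "(\<lambda>\<omega>. card ((\<lambda>p. g p \<omega>) ` {p\<in>P. R p \<omega>})) \<in> measurable N (count_space UNIV)"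
  using assms
proof (induction P rule: finite_induct)
  case empty
  then show ?case by simp
next
  case (insert q P)
  have eq: "card ((\<lambda>p. g p \<omega>) ` {p\<in>insert q P. R p \<omega>}) =
     (if R q \<omega> \<and> (\<forall>p\<in>P. R p \<omega> \<longrightarrow> g p \<omega> \<noteq> g q \<omega>) then Suc (card ((\<lambda>p. g p \<omega>) ` {p\<in>P. R p \<omega>}))
      else card ((\<lambda>p. g p \<omega>) ` {p\<in>P. R p \<omega>}))" for \<omega>
  proof (cases "R q \<omega>")
    case True
    then have "(\<lambda>p. g p \<omega>) ` {p\<in>insert q P. R p \<omega>} = insert (g q \<omega>) ((\<lambda>p. g p \<omega>) ` {p\<in>P. R p \<omega>})"
      by auto
    then show ?thesis using insert.hyps(1) by (auto simp: card_insert_if image_iff)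
  next
    case False
    then have "{p\<in>insert q P. R p \<omega>} = {p\<in>P. R p \<omega>}" by auto
    then show ?thesis using False by simp
  qed
  have "g p \<in> borel_measurable N" "Measurable.pred N (R p)" if "p \<in> insert q P" for p
    using insert.prems that by auto
  then have "Measurable.pred N (\<lambda>\<omega>. R q \<omega> \<and> (\<forall>p\<in>P. R p \<omega> \<longrightarrow> g p \<omega> \<noteq> g q \<omega>))"
    using insert.hyps(1) by measurable
  moreover have "(\<lambda>\<omega>. card ((\<lambda>p. g p \<omega>) ` {p\<in>P. R p \<omega>})) \<in> measurable N (count_space UNIV)"
    using insert by auto
  ultimately show ?case
    unfolding eq by measurable
qed

lemma borel_measurable_kth_smallest_image:
  fixes g :: "'p \<Rightarrow> 'w \<Rightarrow> real"
  assumes "finite P" and "\<And>p. p \<in> P \<Longrightarrow> g p \<in> borel_measurable N"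
    and "\<And>p. p \<in> P \<Longrightarrow> Measurable.pred N (R p)"
  shows "(\<lambda>\<omega>. kth_smallest k ((\<lambda>p. g p \<omega>) ` {p\<in>P. R p \<omega>})) \<in> borel_measurable N"
  unfolding borel_measurable_iff_le
proof
  fix t
  define S where "S = (\<lambda>\<omega>. (\<lambda>p. g p \<omega>) ` {p\<in>P. R p \<omega>})"
  define S_le where "S_le = (\<lambda>\<omega>. (\<lambda>p. g p \<omega>) ` {p\<in>P. R p \<omega> \<and> g p \<omega> \<le> t})"
  have "{x \<in> S \<omega>. x \<le> t} = S_le \<omega>" "finite (S \<omega>)" for \<omega>
    using \<open>finite P\<close> by (auto simp: S_def S_le_def)
  then have le_iff: "kth_smallest k (S \<omega>) \<le> t \<longleftrightarrow>
      (1 \<le> k \<and> k \<le> card (S \<omega>) \<and> k \<le> card (S_le \<omega>)) \<or> (\<not> (1 \<le> k \<and> k \<le> card (S \<omega>)) \<and> 0 \<le> t)" for \<omega>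
    by (simp add: kth_smallest_le_iff)
  have "(\<lambda>\<omega>. card (S \<omega>)) \<in> measurable N (count_space UNIV)"
    "(\<lambda>\<omega>. card (S_le \<omega>)) \<in> measurable N (count_space UNIV)"
    unfolding S_def S_le_def using assms by (intro measurable_card_image_Collect; measurable)+
  then have "Measurable.pred N (\<lambda>\<omega>. kth_smallest k (S \<omega>) \<le> t)"
    unfolding le_iff by measurable
  then show "{\<omega> \<in> space N. kth_smallest k ((\<lambda>p. g p \<omega>) ` {p\<in>P. R p \<omega>}) \<le> t} \<in> sets N"
    by (simp add: pred_def S_def)
qed

lemma borel_measurable_kth_smallest_break_points_Min_affine:
  fixes a :: "'i \<Rightarrow> real" and b :: "'i \<Rightarrow> 'w \<Rightarrow> real"
  assumes fin: "finite I" and ne: "I \<noteq> {}" and b: "\<And>i. i \<in> I \<Longrightarrow> b i \<in> borel_measurable N"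
  shows "(\<lambda>\<omega>. kth_smallest k (break_points (\<lambda>x. Min ((\<lambda>i. a i * x + b i \<omega>) ` I)))) \<in> borel_measurable N"
proof -
  define G where "G \<omega> x = Min ((\<lambda>i. a i * x + b i \<omega>) ` I)" for \<omega> x
  define cross where "cross p \<omega> = (b (snd p) \<omega> - b (fst p) \<omega>) / (a (fst p) - a (snd p))" for p \<omega>
  define active where "active p \<omega> \<longleftrightarrow> a (fst p) \<noteq> a (snd p) \<and>
      a (fst p) * cross p \<omega> + b (fst p) \<omega> = G \<omega> (cross p \<omega>) \<and>
      a (snd p) * cross p \<omega> + b (snd p) \<omega> = G \<omega> (cross p \<omega>)" for p \<omega>
  have break_points_eq: "break_points (G \<omega>) = (\<lambda>p. cross p \<omega>) ` {p\<in>I \<times> I. active p \<omega>}" for \<omega>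
  proof (intro set_eqI iffI)
    fix x assume "x \<in> break_points (G \<omega>)"
    then obtain i j where ij: "i \<in> I" "j \<in> I" "a i \<noteq> a j"
      "a i * x + b i \<omega> = G \<omega> x" "a j * x + b j \<omega> = G \<omega> x"
      using break_points_Min_affine_iff[OF fin ne, where a=a and b="\<lambda>i. b i \<omega>" and x=x]
      unfolding G_def by blast
    then have "x = cross (i, j) \<omega>"
      by (simp add: cross_def field_simps)
    with ij show "x \<in> (\<lambda>p. cross p \<omega>) ` {p\<in>I \<times> I. active p \<omega>}"
      unfolding active_def by (intro image_eqI[of _ _ "(i, j)"]) auto
  next
    fix x assume "x \<in> (\<lambda>p. cross p \<omega>) ` {p\<in>I \<times> I. active p \<omega>}"
    then obtain i j where "i \<in> I" "j \<in> I" "active (i, j) \<omega>" "x = cross (i, j) \<omega>"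
      by auto
    then show "x \<in> break_points (G \<omega>)"
      using break_points_Min_affine_iff[OF fin ne, where a=a and b="\<lambda>i. b i \<omega>" and x=x]
      unfolding G_def active_def by auto
  qed
  have cross: "cross p \<in> borel_measurable N" if "p \<in> I \<times> I" for p
    using that b unfolding cross_def by auto
  have "(\<lambda>\<omega>. G \<omega> (cross p \<omega>)) \<in> borel_measurable N" if "p \<in> I \<times> I" for p
    unfolding G_def by (rule borel_measurable_Min[OF fin]) (use b cross[OF that] in auto)
  moreover have "b (fst p) \<in> borel_measurable N" "b (snd p) \<in> borel_measurable N" if "p \<in> I \<times> I" for p
    using that b by auto
  ultimately have "Measurable.pred N (active p)" if "p \<in> I \<times> I" for p
    using cross[OF that] that unfolding active_def by measurable
  then show ?thesis
    using fin cross unfolding G_def[symmetric] break_points_eq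
    by (intro borel_measurable_kth_smallest_image) auto
qed

lemma emeasure_distr_le_density_bound:
  fixes X :: "'a \<Rightarrow> real"
  assumes X: "distributed M lborel X (\<lambda>y. ennreal (g y))" and g: "\<And>y. g y \<le> \<phi>"
    and A: "A \<in> sets borel"
  shows "emeasure (distr M borel X) A \<le> ennreal \<phi> * emeasure lborel A"
proof -
  have "emeasure (distr M borel X) A = emeasure (distr M lborel X) A"
    using X A by (subst (1 2) emeasure_distr) (auto simp: distributed_def)
  also have "\<dots> = emeasure (density lborel (\<lambda>y. ennreal (g y))) A"
    using X by (simp add: distributed_def)
  also have "\<dots> = (\<integral>\<^sup>+ y. ennreal (g y) * indicator A y \<partial>lborel)"
    using X A by (auto simp: distributed_def emeasure_density)
  also have "\<dots> \<le> (\<integral>\<^sup>+ y. ennreal \<phi> * indicator A y \<partial>lborel)"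
    using g by (intro nn_integral_mono) (auto intro: mult_right_mono ennreal_leI simp: indicator_def)
  also have "\<dots> = ennreal \<phi> * emeasure lborel A"
    using A by (simp add: nn_integral_cmult_indicator)
  finally show ?thesis .
qed

lemma (in prob_space) prob_abs_diff_le_of_bounded_density:
  fixes X Y :: "'a \<Rightarrow> real"
  assumes X: "distributed M lborel X (\<lambda>y. ennreal (g y))" and g: "\<And>y. g y \<le> \<phi>"
    and indep: "indep_var borel X borel Y" and "\<alpha> \<ge> 0" "\<phi> \<ge> 0"
  shows "prob {\<omega> \<in> space M. \<bar>X \<omega> - Y \<omega>\<bar> \<le> \<alpha>} \<le> 2 * \<alpha> * \<phi>"
proof -
  have X_rv: "random_variable borel X" and Y_rv: "random_variable borel Y"
    and joint: "distr M borel X \<Otimes>\<^sub>M distr M borel Y = distr M (borel \<Otimes>\<^sub>M borel) (\<lambda>\<omega>. (X \<omega>, Y \<omega>))"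
    using indep by (simp_all add: indep_var_distribution_eq)
  interpret DX: prob_space "distr M borel X" by (rule prob_space_distr) fact
  interpret DY: prob_space "distr M borel Y" by (rule prob_space_distr) fact
  interpret XY: pair_sigma_finite "distr M borel X" "distr M borel Y" ..
  define S where "S = {p :: real \<times> real. \<bar>fst p - snd p\<bar> \<le> \<alpha>}"
  have "Measurable.pred (borel \<Otimes>\<^sub>M borel) (\<lambda>p :: real \<times> real. \<bar>fst p - snd p\<bar> \<le> \<alpha>)"
    by measurable
  then have S: "S \<in> sets (borel \<Otimes>\<^sub>M borel)"
    unfolding S_def pred_def by (simp add: space_pair_measure)
  have slice: "emeasure (distr M borel X) ((\<lambda>x. (x, y)) -` S) \<le> ennreal (2 * \<alpha> * \<phi>)" for y
  proof -
    have "(\<lambda>x. (x, y)) -` S = {y - \<alpha> .. y + \<alpha>}"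
      unfolding S_def by auto
    then show ?thesis
      using emeasure_distr_le_density_bound[OF X g, of "{y - \<alpha> .. y + \<alpha>}"] \<open>\<alpha> \<ge> 0\<close> \<open>\<phi> \<ge> 0\<close>
      by (simp add: ennreal_mult'[symmetric] mult.commute)
  qed
  have "emeasure M {\<omega> \<in> space M. \<bar>X \<omega> - Y \<omega>\<bar> \<le> \<alpha>} = emeasure (distr M (borel \<Otimes>\<^sub>M borel) (\<lambda>\<omega>. (X \<omega>, Y \<omega>))) S"
    using S X_rv Y_rv by (simp add: emeasure_distr S_def vimage_def Int_def conj_commute)
  also have "\<dots> = (\<integral>\<^sup>+ y. emeasure (distr M borel X) ((\<lambda>x. (x, y)) -` S) \<partial>distr M borel Y)"
    using S by (simp add: joint[symmetric] XY.emeasure_pair_measure_alt2)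
  also have "\<dots> \<le> (\<integral>\<^sup>+ y. ennreal (2 * \<alpha> * \<phi>) \<partial>distr M borel Y)"
    by (intro nn_integral_mono slice)
  also have "\<dots> = ennreal (2 * \<alpha> * \<phi>)"
    using DY.emeasure_space_1 by simp
  finally show ?thesis
    using \<open>\<alpha> \<ge> 0\<close> \<open>\<phi> \<ge> 0\<close> by (simp add: emeasure_eq_measure)
qed

lemma (in prob_space) indep_var_component_fun_of_others:
  assumes "indep_vars N X I" "i \<in> I" "F \<in> measurable (PiM (I - {i}) N) N'"
  shows "indep_var (N i) (X i) N' (\<lambda>\<omega>. F (\<lambda>j\<in>I - {i}. X j \<omega>))"
proof -
  have "indep_var (PiM {i} N) (\<lambda>\<omega>. \<lambda>j\<in>{i}. X j \<omega>) (PiM (I - {i}) N) (\<lambda>\<omega>. \<lambda>j\<in>I - {i}. X j \<omega>)"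
    using assms(1,2) by (intro indep_var_restrict) auto
  from indep_var_compose[OF this measurable_component_singleton assms(3)]
  show ?thesis by (simp add: comp_def)
qed

lemma finite_dcycles: "finite (dcycles n E)"
proof -
  have "dcycles n E \<subseteq> {xs. set xs \<subseteq> {1..n} \<and> length xs \<le> n}"
  proof
    fix c assume "c \<in> dcycles n E"
    then have c: "distinct c" "set c \<subseteq> {1..n}" unfolding dcycles_def by auto
    then have "length c \<le> card {1..n}"
      by (metis card_mono distinct_card finite_atLeastAtMost)
    with c show "c \<in> {xs. set xs \<subseteq> {1..n} \<and> length xs \<le> n}" by simp
  qed
  then show ?thesis
    by (rule finite_subset) (rule finite_lists_length_le, simp)
qed

lemma set_cycle_edges_subset: "c \<in> dcycles n E \<Longrightarrow> set (cycle_edges c) \<subseteq> E"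
  unfolding dcycles_def cycle_edges_def by auto

lemma min_cycle_mean_cong:
  assumes "\<And>e. e \<in> E \<Longrightarrow> w e = w' e"
  shows "min_cycle_mean n E w = min_cycle_mean n E w'"
proof -
  have "cycle_mean w c = cycle_mean w' c" if "c \<in> dcycles n E" for c
    using set_cycle_edges_subset[OF that] assms unfolding cycle_mean_def
    by (metis (mono_tags, lifting) map_eq_conv subsetD)
  then show ?thesis
    unfolding min_cycle_mean_def by (metis (no_types, lifting) image_cong)
qed

lemma kth_break_eq_kth_smallest:
  "kth_break n E e k r = kth_smallest k (break_points (\<lambda>x. min_cycle_mean n E (r(e := x))))"
  by (simp add: kth_break_def kth_smallest_def Let_def)

lemma kth_break_restrict:
  "kth_break n E e k (\<lambda>e'\<in>E - {e}. w e') = kth_break n E e k w"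
  unfolding kth_break_eq_kth_smallest
  by (rule arg_cong[of _ _ "\<lambda>g. kth_smallest k (break_points g)"], rule ext, rule min_cycle_mean_cong) auto

lemma cycle_mean_fun_upd:
  "cycle_mean (w(e := x)) c =
     real (count_list (cycle_edges c) e) / real (length c) * x
     + (\<Sum>e'\<leftarrow>filter (\<lambda>e'. e' \<noteq> e) (cycle_edges c). w e') / real (length c)"
proof -
  have "(\<Sum>e'\<leftarrow>xs. (w(e := x)) e') = real (count_list xs e) * x + (\<Sum>e'\<leftarrow>filter (\<lambda>e'. e' \<noteq> e) xs. w e')"
    for xs by (induction xs) (auto simp: algebra_simps)
  then show ?thesis
    unfolding cycle_mean_def by (simp only: add_divide_distrib times_divide_eq_left)
qed

lemma borel_measurable_sum_list_components:
  "set xs \<subseteq> J \<Longrightarrow> (\<lambda>w. \<Sum>j\<leftarrow>xs. w j) \<in> borel_measurable (PiM J (\<lambda>_. borel :: real measure))"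
  by (induction xs) auto

lemma borel_measurable_kth_break:
  assumes "dcycles n E \<noteq> {}"
  shows "kth_break n E e k \<in> borel_measurable (PiM (E - {e}) (\<lambda>_. borel))"
proof -
  define offset where
    "offset c w = (\<Sum>e'\<leftarrow>filter (\<lambda>e'. e' \<noteq> e) (cycle_edges c). w e') / real (length c)" for c w
  have "offset c \<in> borel_measurable (PiM (E - {e}) (\<lambda>_. borel))" if "c \<in> dcycles n E" for c
    using set_cycle_edges_subset[OF that] unfolding offset_def
    by (intro borel_measurable_divide borel_measurable_sum_list_components measurable_const) auto
  then have "(\<lambda>w. kth_smallest k (break_points (\<lambda>x. min_cycle_mean n E (w(e := x)))))
      \<in> borel_measurable (PiM (E - {e}) (\<lambda>_. borel))"
    unfolding min_cycle_mean_def cycle_mean_fun_upd offset_def[symmetric]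
    by (rule borel_measurable_kth_smallest_break_points_Min_affine[OF finite_dcycles assms])
  then show ?thesis
    unfolding kth_break_eq_kth_smallest[abs_def] .
qed

lemma (in prob_space) indep_var_kth_break:
  assumes "dcycles n E \<noteq> {}" "indep_vars (\<lambda>_. borel) r E" "e \<in> E"
  shows "indep_var borel (r e) borel (\<lambda>\<omega>. kth_break n E e k (\<lambda>e'. r e' \<omega>))"
  using indep_var_component_fun_of_others[OF assms(2,3) borel_measurable_kth_break[OF assms(1)]]
  by (simp add: kth_break_restrict)

lemma (in prob_space)
  fixes k :: nat
  assumes "dcycles n E \<noteq> {}" "indep_vars (\<lambda>_. borel) r E" "e \<in> E"
    and "distributed M lborel (r e) (\<lambda>y. ennreal (g y))" "\<And>y. g y \<le> \<phi>" "\<alpha> \<ge> 0" "\<phi> \<ge> 0"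
  defines "A \<equiv> {\<omega> \<in> space M. \<bar>r e \<omega> - kth_break n E e k (\<lambda>e'. r e' \<omega>)\<bar> \<le> \<alpha>}"
  shows sets_near_kth_break: "A \<in> events"
    and prob_near_kth_break_le: "prob A \<le> 2 * \<alpha> * \<phi>"
proof -
  have indep: "indep_var borel (r e) borel (\<lambda>\<omega>. kth_break n E e k (\<lambda>e'. r e' \<omega>))"
    using assms(1-3) by (rule indep_var_kth_break)
  then have "random_variable borel (r e)"
    "random_variable borel (\<lambda>\<omega>. kth_break n E e k (\<lambda>e'. r e' \<omega>))"
    by (simp_all add: indep_var_distribution_eq)
  then show "A \<in> events"
    unfolding A_def by measurable
  show "prob A \<le> 2 * \<alpha> * \<phi>"
    unfolding A_def using assms(4,5) indep assms(6,7) by (rule prob_abs_diff_le_of_bounded_density)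
qed

theorem mainTheorem3:
  fixes n :: nat and E :: "edge set" and M :: "'a measure"
    and r :: "edge \<Rightarrow> 'a \<Rightarrow> real" and f :: "edge \<Rightarrow> real \<Rightarrow> real"
    and \<phi> \<alpha> :: real
  assumes "prob_space M"
    and "E \<subseteq> {1..n} \<times> {1..n}"
    and "\<forall>i\<in>{1..n}. \<exists>j. (i, j) \<in> E"
    and "dcycles n E \<noteq> {}"
    and "prob_space.indep_vars M (\<lambda>_. borel) r E"
    and "\<forall>e\<in>E. distributed M lborel (r e) (\<lambda>y. ennreal (f e y))"
    and "\<phi> > 0"
    and "\<forall>e\<in>E. \<forall>y. f e y \<le> \<phi>"
    and "\<alpha> > 0"
  shows "measure M {\<omega> \<in> space M. \<exists>e\<in>E. \<exists>k\<in>{1..n}.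
            \<bar>r e \<omega> - kth_break n E e k (\<lambda>e'. r e' \<omega>)\<bar> \<le> \<alpha>}
         \<le> 2 * \<alpha> * real n * real (card E) * \<phi>"
proof -
  interpret prob_space M by fact
  define near where
    "near = (\<lambda>(e, k). {\<omega> \<in> space M. \<bar>r e \<omega> - kth_break n E e k (\<lambda>e'. r e' \<omega>)\<bar> \<le> \<alpha>})"
  have near: "near p \<in> events" "prob (near p) \<le> 2 * \<alpha> * \<phi>" if "p \<in> E \<times> {1..n}" for p
    using that assms(4-9) unfolding near_def
    by (auto intro!: sets_near_kth_break prob_near_kth_break_le)
  have "finite (E \<times> {1..n})"
    using assms(2) finite_subset by blast
  have "{\<omega> \<in> space M. \<exists>e\<in>E. \<exists>k\<in>{1..n}. \<bar>r e \<omega> - kth_break n E e k (\<lambda>e'. r e' \<omega>)\<bar> \<le> \<alpha>}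
      = (\<Union>p\<in>E \<times> {1..n}. near p)"
    unfolding near_def by blast
  also have "prob \<dots> \<le> (\<Sum>p\<in>E \<times> {1..n}. prob (near p))"
    using \<open>finite (E \<times> {1..n})\<close> near by (intro measure_UNION_le) auto
  also have "\<dots> \<le> real (card (E \<times> {1..n})) * (2 * \<alpha> * \<phi>)"
    using near by (intro sum_bounded_above) auto
  finally show ?thesis
    by (simp add: card_cartesian_product algebra_simps)
qed

end
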